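(* Let $k\ge 0$ and let $G$ be a $B_k$-EPG graph on $n$ vertices with clique number $\omega(G)$. Then $G$ has at most $(k+1)(\omega(G)-1)\,n$ edges.
   Context: A graph $G$ is a $B_k$-EPG graph if each vertex $u$ can be assigned a path $P_u$ in the planar orthogonal grid with at most $k$ bends (turns) such that $uv\in E(G)$ if and only if $P_u$ and $P_v$ share at least one grid edge. $\omega(G)$ denotes the maximum size of a clique of $G$. *)

theory Defs
  imports Main
begin

type_synonym gpoint = "int \<times> int"

definition simple_graph :: "'a set \<Rightarrow> ('a \<Rightarrow> 'a \<Rightarrow> bool) \<Rightarrow> bool" where
  "simple_graph V E \<longleftrightarrow> finite V \<and> (\<forall>u v. E u v \<longrightarrow> u \<in> V \<and> v \<in> V)
     \<and> (\<forall>u v. E u v \<longrightarrow> E v u) \<and> (\<forall>u. \<not> E u u)"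

definition graph_edges :: "'a set \<Rightarrow> ('a \<Rightarrow> 'a \<Rightarrow> bool) \<Rightarrow> 'a set set" where
  "graph_edges V E = {{u, v} | u v. u \<in> V \<and> v \<in> V \<and> E u v}"

definition is_clique :: "'a set \<Rightarrow> ('a \<Rightarrow> 'a \<Rightarrow> bool) \<Rightarrow> 'a set \<Rightarrow> bool" where
  "is_clique V E C \<longleftrightarrow> C \<subseteq> V \<and> (\<forall>u\<in>C. \<forall>v\<in>C. u \<noteq> v \<longrightarrow> E u v)"

definition clique_number :: "'a set \<Rightarrow> ('a \<Rightarrow> 'a \<Rightarrow> bool) \<Rightarrow> nat" where
  "clique_number V E = Max {card C | C. is_clique V E C}"

definition grid_adj :: "gpoint \<Rightarrow> gpoint \<Rightarrow> bool" where
  "grid_adj p q \<longleftrightarrow> \<bar>fst p - fst q\<bar> + \<bar>snd p - snd q\<bar> = 1"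

definition grid_path :: "gpoint list \<Rightarrow> bool" where
  "grid_path ps \<longleftrightarrow> ps \<noteq> [] \<and> distinct ps \<and>
     (\<forall>i. Suc i < length ps \<longrightarrow> grid_adj (ps ! i) (ps ! Suc i))"

definition path_grid_edges :: "gpoint list \<Rightarrow> gpoint set set" where
  "path_grid_edges ps = {{ps ! i, ps ! Suc i} | i. Suc i < length ps}"

definition step_dir :: "gpoint \<Rightarrow> gpoint \<Rightarrow> gpoint" where
  "step_dir p q = (fst q - fst p, snd q - snd p)"

definition bends :: "gpoint list \<Rightarrow> nat" where
  "bends ps = card {i. Suc (Suc i) < length ps \<and>
      step_dir (ps ! i) (ps ! Suc i) \<noteq> step_dir (ps ! Suc i) (ps ! Suc (Suc i))}"

definition Bk_EPG_rep :: "nat \<Rightarrow> 'a set \<Rightarrow> ('a \<Rightarrow> 'a \<Rightarrow> bool) \<Rightarrow> ('a \<Rightarrow> gpoint list) \<Rightarrow> bool" where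
  "Bk_EPG_rep k V E P \<longleftrightarrow>
     (\<forall>u\<in>V. grid_path (P u) \<and> bends (P u) \<le> k) \<and>
     (\<forall>u\<in>V. \<forall>v\<in>V. u \<noteq> v \<longrightarrow>
        (E u v \<longleftrightarrow> path_grid_edges (P u) \<inter> path_grid_edges (P v) \<noteq> {}))"

definition Bk_EPG :: "nat \<Rightarrow> 'a set \<Rightarrow> ('a \<Rightarrow> 'a \<Rightarrow> bool) \<Rightarrow> bool" where
  "Bk_EPG k V E \<longleftrightarrow> simple_graph V E \<and> (\<exists>P. Bk_EPG_rep k V E P)"

end

theory Submission
  imports Defs "HOL-Library.Product_Plus"
begin

text \<open>Call a grid edge of a path initial if it is the lowest edge, along its grid line, of a
  maximal set of consecutive collinear edges of the path. Between any two initial edges the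
  path bends, so a path with at most k bends has at most k + 1 initial edges. If the paths of
  u and v share a grid edge, then the lowest edge of the run of shared edges on that grid line
  is initial in the path of u or of v; charge the edge uv to that endpoint and that initial
  edge f. All vertices whose paths contain f form a clique, so at most \<omega> - 1 edges are
  charged to each pair (w, f), and there are at most (k + 1) n such pairs.\<close>

definition axis_dirs :: "gpoint set" where
  "axis_dirs = {(1, 0), (0, 1)}"

definition initial_edges :: "gpoint list \<Rightarrow> gpoint set set" where
  "initial_edges ps = {{p, p + d} | p d. d \<in> axis_dirs \<and>
     {p, p + d} \<in> path_grid_edges ps \<and> {p - d, p} \<notin> path_grid_edges ps}"

lemma step_dir_eq_diff: "step_dir p q = q - p"
  by (simp add: step_dir_def prod_eq_iff)

lemma finite_path_grid_edges: "finite (path_grid_edges ps)"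
proof -
  have "path_grid_edges ps = (\<lambda>i. {ps ! i, ps ! Suc i}) ` {i. Suc i < length ps}"
    by (auto simp: path_grid_edges_def)
  moreover have "finite {i. Suc i < length ps}"
    by (rule finite_subset[of _ "{..<length ps}"]) auto
  ultimately show ?thesis by simp
qed

lemma path_grid_edgeI: "Suc i < length ps \<Longrightarrow> {ps ! i, ps ! Suc i} \<in> path_grid_edges ps"
  by (auto simp: path_grid_edges_def)

lemma finite_initial_edges: "finite (initial_edges ps)"
  by (rule finite_subset[OF _ finite_path_grid_edges]) (auto simp: initial_edges_def)

lemma initial_edges_subset: "initial_edges ps \<subseteq> path_grid_edges ps"
  by (auto simp: initial_edges_def)

lemma axis_dir_weight: "d \<in> axis_dirs \<Longrightarrow> fst d + snd d = 1"
  by (auto simp: axis_dirs_def)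

lemma grid_adj_axis_edge:
  assumes "grid_adj a b"
  obtains p d where "d \<in> axis_dirs" "{a, b} = {p, p + d}"
proof -
  have "b - a \<in> axis_dirs \<or> a - b \<in> axis_dirs"
    using assms by (cases a; cases b) (auto simp: grid_adj_def axis_dirs_def abs_if split: if_splits)
  then show thesis
  proof
    assume "b - a \<in> axis_dirs"
    then show thesis by (rule that[of _ a]) simp
  next
    assume "a - b \<in> axis_dirs"
    then show thesis by (rule that[of _ b]) (simp add: insert_commute)
  qed
qed

lemma finite_edge_set_has_first_edge:
  fixes S :: "gpoint set set"
  assumes "finite S" "{p, p + d} \<in> S" "fst d + snd d > 0"
  shows "\<exists>q. {q, q + d} \<in> S \<and> {q - d, q} \<notin> S"
proof -
  define Q where "Q = {q. {q, q + d} \<in> S}"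
  have "inj_on (\<lambda>q. {q, q + d}) Q"
    using assms(3) by (auto intro!: inj_onI simp: doubleton_eq_iff prod_eq_iff)
  moreover have "finite ((\<lambda>q. {q, q + d}) ` Q)"
    by (rule finite_subset[OF _ assms(1)]) (auto simp: Q_def)
  ultimately have "finite Q"
    by (simp add: finite_image_iff)
  have "p \<in> Q"
    using assms(2) by (simp add: Q_def)
  then have "Q \<noteq> {}" by blast
  define q where "q = arg_min_on (\<lambda>q. fst q + snd q) Q"
  have qQ: "q \<in> Q" and qmin: "\<not> (\<exists>q'\<in>Q. fst q' + snd q' < fst q + snd q)"
    unfolding q_def using arg_min_if_finite[OF \<open>finite Q\<close> \<open>Q \<noteq> {}\<close>] by simp_all
  have "fst (q - d) + snd (q - d) < fst q + snd q"
    using assms(3) by simp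
  then have "q - d \<notin> Q"
    using qmin by blast
  then have "{q - d, q} \<notin> S"
    by (simp add: Q_def)
  moreover have "{q, q + d} \<in> S"
    using qQ by (simp add: Q_def)
  ultimately show ?thesis by blast
qed

lemma card_le_card_separators_Suc:
  fixes I B :: "nat set"
  assumes "finite B" and "\<And>i j. i \<in> I \<Longrightarrow> j \<in> I \<Longrightarrow> i < j \<Longrightarrow> \<exists>b\<in>B. i \<le> b \<and> b < j"
  shows "card I \<le> card B + 1"
proof -
  define rank where "rank i = card {b\<in>B. b < i}" for i
  have rank_less: "rank i < rank j" if ij: "i \<in> I" "j \<in> I" "i < j" for i j
  proof -
    obtain b where b: "b \<in> B" "i \<le> b" "b < j"
      using assms(2)[OF ij] by blast
    have "{b\<in>B. b < i} \<subset> {b\<in>B. b < j}"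
    proof
      show "{b\<in>B. b < i} \<subseteq> {b\<in>B. b < j}"
        using \<open>i < j\<close> by auto
      have "b \<in> {b\<in>B. b < j} - {b\<in>B. b < i}"
        using b by simp
      then show "{b\<in>B. b < i} \<noteq> {b\<in>B. b < j}"
        by auto
    qed
    then show ?thesis
      unfolding rank_def by (rule psubset_card_mono[rotated]) (simp add: assms(1))
  qed
  have "inj_on rank I"
  proof (rule inj_onI)
    fix i j assume "i \<in> I" "j \<in> I" "rank i = rank j"
    then show "i = j"
      using rank_less[of i j] rank_less[of j i] by (cases i j rule: linorder_cases) auto
  qed
  moreover have "rank ` I \<subseteq> {..card B}"
    unfolding rank_def using assms(1) by (auto intro: card_mono)
  ultimately have "card I \<le> card {..card B}"
    by (rule card_inj_on_le) simp
  then show ?thesis by simp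
qed

lemma straight_run_step:
  assumes "\<And>m. i \<le> m \<Longrightarrow> m < j \<Longrightarrow>
      step_dir (ps ! m) (ps ! Suc m) = step_dir (ps ! Suc m) (ps ! Suc (Suc m))"
  shows "i \<le> m \<Longrightarrow> m \<le> j \<Longrightarrow> ps ! Suc m - ps ! m = ps ! Suc i - ps ! i"
proof (induction m)
  case (Suc m)
  show ?case
  proof (cases "i = Suc m")
    case False
    then have "i \<le> m" "m < j"
      using Suc.prems by auto
    then show ?thesis
      using Suc.IH assms[of m] by (simp add: step_dir_eq_diff)
  qed simp
qed simp

lemma bend_between_initial_edges:
  assumes "i < j" "Suc j < length ps"
    and initial_i: "{ps ! i, ps ! Suc i} \<in> initial_edges ps"
    and initial_j: "{ps ! j, ps ! Suc j} \<in> initial_edges ps"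
  shows "\<exists>m. i \<le> m \<and> m < j \<and>
      step_dir (ps ! m) (ps ! Suc m) \<noteq> step_dir (ps ! Suc m) (ps ! Suc (Suc m))"
proof (rule ccontr)
  assume "\<not> ?thesis"
  then have run: "ps ! Suc m = ps ! m + (ps ! Suc i - ps ! i)" if "i \<le> m" "m \<le> j" for m
    using straight_run_step[of i j ps m] that by (metis add_diff_cancel_left' diff_add_cancel)
  obtain p d where d: "d \<in> axis_dirs" and pd: "{ps ! i, ps ! Suc i} = {p, p + d}"
    and below: "{p - d, p} \<notin> path_grid_edges ps"
    using initial_i by (auto simp: initial_edges_def)
  obtain p' d' where d': "d' \<in> axis_dirs" and pd': "{ps ! j, ps ! Suc j} = {p', p' + d'}"
    and below': "{p' - d', p'} \<notin> path_grid_edges ps"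
    using initial_j by (auto simp: initial_edges_def)
  \<comment> \<open>The step is constant from i to j. Along d, the edge before j is the one below edge j;
    against d, the edge after i is the one below edge i.\<close>
  from pd consider "ps ! i = p" "ps ! Suc i = p + d" | "ps ! i = p + d" "ps ! Suc i = p"
    by (auto simp: doubleton_eq_iff)
  then show False
  proof cases
    case 1
    then have step: "ps ! Suc m = ps ! m + d" if "i \<le> m" "m \<le> j" for m
      using run[OF that] by simp
    from pd' consider "ps ! j = p'" "ps ! Suc j = p' + d'" | "ps ! j = p' + d'" "ps ! Suc j = p'"
      by (auto simp: doubleton_eq_iff)
    then show False
    proof cases
      case 1
      then have "d' = d"
        using step[of j] \<open>i < j\<close> by simp
      moreover have "ps ! j = ps ! (j - 1) + d"
        using step[of "j - 1"] \<open>i < j\<close> by simp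
      moreover have "{ps ! (j - 1), ps ! j} \<in> path_grid_edges ps"
        using path_grid_edgeI[of "j - 1" ps] \<open>i < j\<close> assms(2) by simp
      ultimately show False
        using below' \<open>ps ! j = p'\<close> by (metis add_diff_cancel)
    next
      case 2
      then have "d' + d = 0"
        using step[of j] \<open>i < j\<close> by (simp add: add.assoc)
      then show False
        using axis_dir_weight[OF d] axis_dir_weight[OF d'] by (simp add: prod_eq_iff)
    qed
  next
    case 2
    then have "ps ! Suc (Suc i) = p - d"
      using run[of "Suc i"] \<open>i < j\<close> by simp
    moreover have "{ps ! Suc i, ps ! Suc (Suc i)} \<in> path_grid_edges ps"
      using path_grid_edgeI[of "Suc i" ps] \<open>i < j\<close> assms(2) by simp
    ultimately show False
      using below \<open>ps ! Suc i = p\<close> by (simp add: insert_commute)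
  qed
qed

lemma card_initial_edges_le: "card (initial_edges ps) \<le> bends ps + 1"
proof -
  define I where "I = {i. Suc i < length ps \<and> {ps ! i, ps ! Suc i} \<in> initial_edges ps}"
  define B where "B = {m. Suc (Suc m) < length ps \<and>
      step_dir (ps ! m) (ps ! Suc m) \<noteq> step_dir (ps ! Suc m) (ps ! Suc (Suc m))}"
  have "finite I"
    by (rule finite_subset[of _ "{..<length ps}"]) (auto simp: I_def)
  have "initial_edges ps \<subseteq> (\<lambda>i. {ps ! i, ps ! Suc i}) ` I"
    using initial_edges_subset[of ps] by (auto simp: I_def path_grid_edges_def)
  then have "card (initial_edges ps) \<le> card I"
    using \<open>finite I\<close> by (meson card_image_le card_mono finite_imageI le_trans)
  also have "\<dots> \<le> card B + 1"
  proof (rule card_le_card_separators_Suc)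
    show "finite B"
      by (rule finite_subset[of _ "{..<length ps}"]) (auto simp: B_def)
  next
    fix i j assume "i \<in> I" "j \<in> I" "i < j"
    then show "\<exists>b\<in>B. i \<le> b \<and> b < j"
      using bend_between_initial_edges[of i j ps] unfolding I_def B_def
      by (metis (mono_tags, lifting) Suc_less_eq less_trans_Suc mem_Collect_eq)
  qed
  finally show ?thesis
    by (simp add: bends_def B_def)
qed

definition paths_through :: "'a set \<Rightarrow> ('a \<Rightarrow> gpoint list) \<Rightarrow> gpoint set \<Rightarrow> 'a set" where
  "paths_through V P f = {x \<in> V. f \<in> path_grid_edges (P x)}"

definition charged_edges :: "'a set \<Rightarrow> ('a \<Rightarrow> gpoint list) \<Rightarrow> 'a \<Rightarrow> 'a set set" where
  "charged_edges V P w = (\<Union>f\<in>initial_edges (P w). (\<lambda>x. {w, x}) ` (paths_through V P f - {w}))"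

lemma card_clique_le_clique_number:
  assumes "finite V" "is_clique V E C"
  shows "card C \<le> clique_number V E"
proof -
  have "{card C | C. is_clique V E C} \<subseteq> card ` Pow V"
    by (auto simp: is_clique_def)
  then have "finite {card C | C. is_clique V E C}"
    by (rule finite_subset) (simp add: assms(1))
  then show ?thesis
    unfolding clique_number_def using assms(2) by (auto intro: Max_ge)
qed

lemma clique_paths_through:
  assumes "Bk_EPG_rep k V E P"
  shows "is_clique V E (paths_through V P f)"
  using assms by (auto simp: is_clique_def paths_through_def Bk_EPG_rep_def)

lemma Bk_EPG_edge_shares_initial_edge:
  assumes rep: "Bk_EPG_rep k V E P" and "u \<in> V" "v \<in> V" "u \<noteq> v" "E u v"
  obtains f where "f \<in> initial_edges (P u)" "f \<in> path_grid_edges (P v)"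
    | f where "f \<in> initial_edges (P v)" "f \<in> path_grid_edges (P u)"
proof -
  let ?S = "path_grid_edges (P u) \<inter> path_grid_edges (P v)"
  obtain g where g: "g \<in> ?S"
    using rep assms(2-5) by (auto simp: Bk_EPG_rep_def)
  then obtain i where i: "Suc i < length (P u)" "g = {P u ! i, P u ! Suc i}"
    by (auto simp: path_grid_edges_def)
  moreover have "grid_adj (P u ! i) (P u ! Suc i)"
    using rep \<open>u \<in> V\<close> i(1) by (auto simp: Bk_EPG_rep_def grid_path_def)
  ultimately obtain p d where d: "d \<in> axis_dirs" "g = {p, p + d}"
    using grid_adj_axis_edge by metis
  obtain q where q: "{q, q + d} \<in> ?S" "{q - d, q} \<notin> ?S"
    using finite_edge_set_has_first_edge[of ?S p d] g d axis_dir_weight[OF d(1)]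
    by (auto simp: finite_path_grid_edges)
  then show thesis
    using d(1) that unfolding initial_edges_def by blast
qed

lemma graph_edges_subset_charged_edges:
  assumes "Bk_EPG_rep k V E P" "\<And>u. \<not> E u u"
  shows "graph_edges V E \<subseteq> (\<Union>w\<in>V. charged_edges V P w)"
proof
  fix e assume "e \<in> graph_edges V E"
  then obtain u v where e: "e = {u, v}" and uv: "u \<in> V" "v \<in> V" "E u v"
    by (auto simp: graph_edges_def)
  have "u \<noteq> v"
    using assms(2) uv(3) by blast
  from assms(1) uv(1,2) \<open>u \<noteq> v\<close> uv(3) show "e \<in> (\<Union>w\<in>V. charged_edges V P w)"
  proof (cases rule: Bk_EPG_edge_shares_initial_edge)
    case (1 f)
    then have "v \<in> paths_through V P f - {u}"
      using uv \<open>u \<noteq> v\<close> by (simp add: paths_through_def)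
    then have "e \<in> charged_edges V P u"
      unfolding charged_edges_def e using 1(1) by blast
    then show ?thesis using uv(1) by blast
  next
    case (2 f)
    then have "u \<in> paths_through V P f - {v}"
      using uv \<open>u \<noteq> v\<close> by (simp add: paths_through_def)
    moreover have "e = {v, u}"
      using e by blast
    ultimately have "e \<in> charged_edges V P v"
      unfolding charged_edges_def using 2(1) by blast
    then show ?thesis using uv(2) by blast
  qed
qed

lemma finite_charged_edges: "finite V \<Longrightarrow> finite (charged_edges V P w)"
  by (simp add: charged_edges_def paths_through_def finite_initial_edges)

lemma card_charged_edges_le:
  assumes rep: "Bk_EPG_rep k V E P" and "finite V" "w \<in> V"
  shows "card (charged_edges V P w) \<le> (k + 1) * (clique_number V E - 1)"
proof -
  have card_sharers: "card (paths_through V P f - {w}) \<le> clique_number V E - 1"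
    if "f \<in> initial_edges (P w)" for f
  proof -
    have "w \<in> paths_through V P f"
      using that \<open>w \<in> V\<close> initial_edges_subset by (auto simp: paths_through_def)
    moreover have "card (paths_through V P f) \<le> clique_number V E"
      using card_clique_le_clique_number[OF \<open>finite V\<close> clique_paths_through[OF rep]] .
    ultimately show ?thesis
      by (simp add: card_Diff_singleton_if)
  qed
  have "card (charged_edges V P w)
      \<le> (\<Sum>f\<in>initial_edges (P w). card ((\<lambda>x. {w, x}) ` (paths_through V P f - {w})))"
    unfolding charged_edges_def by (rule card_UN_le[OF finite_initial_edges])
  also have "\<dots> \<le> (\<Sum>f\<in>initial_edges (P w). clique_number V E - 1)"
  proof (rule sum_mono)
    fix f assume "f \<in> initial_edges (P w)"
    have "card ((\<lambda>x. {w, x}) ` (paths_through V P f - {w})) \<le> card (paths_through V P f - {w})"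
      by (rule card_image_le) (simp add: paths_through_def \<open>finite V\<close>)
    then show "card ((\<lambda>x. {w, x}) ` (paths_through V P f - {w})) \<le> clique_number V E - 1"
      using card_sharers[OF \<open>f \<in> initial_edges (P w)\<close>] by linarith
  qed
  also have "\<dots> = card (initial_edges (P w)) * (clique_number V E - 1)"
    by simp
  also have "\<dots> \<le> (k + 1) * (clique_number V E - 1)"
  proof (rule mult_right_mono)
    have "bends (P w) \<le> k"
      using rep \<open>w \<in> V\<close> by (simp add: Bk_EPG_rep_def)
    then show "card (initial_edges (P w)) \<le> k + 1"
      using card_initial_edges_le[of "P w"] by linarith
  qed simp
  finally show ?thesis .
qed

theorem lemma12:
  fixes k :: nat and V :: "'a set" and E :: "'a \<Rightarrow> 'a \<Rightarrow> bool"
  assumes "Bk_EPG k V E"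
  shows "card (graph_edges V E) \<le> (k + 1) * (clique_number V E - 1) * card V"
proof -
  from assms obtain P where "finite V" "\<And>u. \<not> E u u" and rep: "Bk_EPG_rep k V E P"
    by (auto simp: Bk_EPG_def simple_graph_def)
  have "card (graph_edges V E) \<le> card (\<Union>w\<in>V. charged_edges V P w)"
    by (rule card_mono) (use graph_edges_subset_charged_edges[OF rep] \<open>\<And>u. \<not> E u u\<close> in
        \<open>simp_all add: finite_charged_edges \<open>finite V\<close>\<close>)
  also have "\<dots> \<le> (\<Sum>w\<in>V. card (charged_edges V P w))"
    by (rule card_UN_le[OF \<open>finite V\<close>])
  also have "\<dots> \<le> (\<Sum>w\<in>V. (k + 1) * (clique_number V E - 1))"
    by (rule sum_mono) (rule card_charged_edges_le[OF rep \<open>finite V\<close>])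
  finally show ?thesis
    by (simp add: mult.commute)
qed

end
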